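(* Let $P=\{\pi=(\pi_0,\dots,\pi_c)\in(0,\infty)^{c+1}:\ \sum_{j=0}^c\pi_j=1,\ (c-j+1)\pi_{j-1}\le \lambda d\,\pi_j \text{ for all } j\in\{1,\dots,c\}\}$ and, for $\pi\in P$, let $$\Pi(\pi)=\sum_{j=1}^c \pi_j\,\lambda\, g\!\left(\frac{(c-j+1)\,\pi_{j-1}}{\lambda d\,\pi_j}\right).$$ Then $P$ is convex and $\Pi$ is concave on $P$. Moreover, for every $\pi\in P$, setting $x_j=\frac{(c-j+1)\pi_{j-1}}{\lambda d\pi_j}$ for $j=1,\dots,c$ defines a stock-dependent policy $\mathbf x\in(0,1]^c$ whose steady-state distribution is $\pi$ and whose long-run average reward is $\mathcal R(\mathbf x)=\Pi(\pi)$; thus maximizing over stock-dependent policies with strictly positive steady-state probabilities is a convex program in $\pi$.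
   Context: Setting. Fix $c\in\mathbb N$ (number of identical units of a single reusable resource), an arrival rate $\lambda>0$ and a mean usage duration $d>0$, with $x^*:=c/(\lambda d)\in(0,1)$. Let $g:[0,1]\to\mathbb R$ be concave, non-decreasing, with $g(0)=0$ (the reward function; $\partial g(x)$ denotes its set of supergradients at $x$). A stock-dependent policy is a vector $\mathbf x=(x_1,\dots,x_c)\in[0,1]^c$, where $x_j$ is the admission probability used when exactly $j$ units are available (the admission probability is $0$ when no unit is available). Its steady-state distribution is the unique probability vector $\pi=(\pi_0,\dots,\pi_c)$ satisfying $\pi_j\lambda x_j=\pi_{j-1}(c-j+1)/d$ for all $j\in\{1,\dots,c\}$ (by an insensitivity result, for any usage-duration distribution with mean $d$, $\pi_j$ is the long-run fraction of time with exactly $j$ units available), and its long-run average reward is $\mathcal R(\mathbf x)=\sum_{j=1}^c\pi_j\lambda g(x_j)$. *)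

theory Defs
  imports "HOL-Analysis.Analysis"
begin

text \<open>Distributions over stock levels 0..c are represented as functions nat \<Rightarrow> real,
  required to vanish outside {0..c}. Policies are functions nat \<Rightarrow> real whose
  values at 1..c are the admission probabilities (values elsewhere are irrelevant).\<close>

definition is_policy :: "nat \<Rightarrow> (nat \<Rightarrow> real) \<Rightarrow> bool" where
  "is_policy c x \<longleftrightarrow> (\<forall>j\<in>{1..c}. 0 \<le> x j \<and> x j \<le> 1)"

definition balance_dist :: "nat \<Rightarrow> real \<Rightarrow> real \<Rightarrow> (nat \<Rightarrow> real) \<Rightarrow> (nat \<Rightarrow> real) \<Rightarrow> bool" where
  "balance_dist c lam d x p \<longleftrightarrow>
     (\<forall>j\<in>{0..c}. 0 \<le> p j) \<and> (\<forall>j>c. p j = 0) \<and> (\<Sum>j=0..c. p j) = 1 \<and>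
     (\<forall>j\<in>{1..c}. p j * lam * x j = p (j - 1) * real (c - j + 1) / d)"

definition steady_state :: "nat \<Rightarrow> real \<Rightarrow> real \<Rightarrow> (nat \<Rightarrow> real) \<Rightarrow> (nat \<Rightarrow> real)" where
  "steady_state c lam d x = (THE p. balance_dist c lam d x p)"

definition avg_reward :: "nat \<Rightarrow> real \<Rightarrow> real \<Rightarrow> (real \<Rightarrow> real) \<Rightarrow> (nat \<Rightarrow> real) \<Rightarrow> real" where
  "avg_reward c lam d g x = (\<Sum>j=1..c. steady_state c lam d x j * lam * g (x j))"

definition Pset :: "nat \<Rightarrow> real \<Rightarrow> real \<Rightarrow> (nat \<Rightarrow> real) set" where
  "Pset c lam d = {p. (\<forall>j\<in>{0..c}. 0 < p j) \<and> (\<forall>j>c. p j = 0) \<and> (\<Sum>j=0..c. p j) = 1 \<and>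
       (\<forall>j\<in>{1..c}. real (c - j + 1) * p (j - 1) \<le> lam * d * p j)}"

definition PiR :: "nat \<Rightarrow> real \<Rightarrow> real \<Rightarrow> (real \<Rightarrow> real) \<Rightarrow> (nat \<Rightarrow> real) \<Rightarrow> real" where
  "PiR c lam d g p = (\<Sum>j=1..c. p j * lam * g (real (c - j + 1) * p (j - 1) / (lam * d * p j)))"

end

theory Submission
  imports Defs
begin

text \<open>The reward term of stock level j is lam times the perspective
  (a, u) \<mapsto> a g(u/a) of g, evaluated at a = p j and u = (c-j+1) p(j-1)/(lam d),
  which is linear in p; perspectives of concave functions are concave, so PiR is
  concave, while the constraints defining Pset are linear. The admission
  probabilities read off from p satisfy the balance equations with p, and these
  equations determine the distribution up to scaling, so p is the steady state.\<close>

definition induced_policy :: "nat \<Rightarrow> real \<Rightarrow> real \<Rightarrow> (nat \<Rightarrow> real) \<Rightarrow> nat \<Rightarrow> real" where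
  "induced_policy c lam d p j = real (c - j + 1) * p (j - 1) / (lam * d * p j)"

lemma convex_comb_pos:
  fixes a b t :: real
  assumes "0 < a" "0 < b" "0 \<le> t" "t \<le> 1"
  shows "0 < t * a + (1 - t) * b"
proof (cases "t = 1")
  case False
  then have "0 < (1 - t) * b" using assms by simp
  then show ?thesis using assms by (simp add: add_nonneg_pos)
qed (use assms in simp)

lemma concave_on_perspective:
  fixes g :: "real \<Rightarrow> real"
  assumes "concave_on S g" "0 < a" "0 < b" "0 \<le> t" "t \<le> 1" "u / a \<in> S" "v / b \<in> S"
  shows "t * (a * g (u / a)) + (1 - t) * (b * g (v / b))
    \<le> (t * a + (1 - t) * b) * g ((t * u + (1 - t) * v) / (t * a + (1 - t) * b))"
proof -
  define V where "V = t * a + (1 - t) * b"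
  define s where "s = (1 - t) * b / V"
  have V: "0 < V" using convex_comb_pos assms unfolding V_def by blast
  have s: "0 \<le> s" "s \<le> 1" "1 - s = t * a / V"
    using V assms by (auto simp: s_def V_def field_simps)
  have mix: "(1 - s) *\<^sub>R (u / a) + s *\<^sub>R (v / b) = (t * u + (1 - t) * v) / V"
    using V assms unfolding s(3) by (simp add: s_def field_simps)
  have "(1 - s) * g (u / a) + s * g (v / b) \<le> g ((t * u + (1 - t) * v) / V)"
    using concave_onD[OF assms(1) s(1,2) assms(6,7)] by (simp only: mix)
  then have "V * ((1 - s) * g (u / a) + s * g (v / b)) \<le> V * g ((t * u + (1 - t) * v) / V)"
    using V by simp
  moreover have "V * ((1 - s) * g (u / a) + s * g (v / b))
      = t * (a * g (u / a)) + (1 - t) * (b * g (v / b))"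
    using V unfolding s(3) by (simp add: s_def field_simps)
  ultimately show ?thesis by (simp add: V_def)
qed

lemma Pset_convex_comb:
  assumes p: "p \<in> Pset c lam d" and q: "q \<in> Pset c lam d" and t: "0 \<le> t" "t \<le> 1"
  shows "(\<lambda>j. t * p j + (1 - t) * q j) \<in> Pset c lam d"
  unfolding Pset_def
proof (intro CollectI conjI ballI allI impI)
  fix j assume "j \<in> {0..c}"
  then show "0 < t * p j + (1 - t) * q j"
    using p q t by (intro convex_comb_pos) (auto simp: Pset_def)
next
  fix j assume "c < j"
  then show "t * p j + (1 - t) * q j = 0" using p q by (simp add: Pset_def)
next
  have "(\<Sum>j=0..c. t * p j + (1 - t) * q j) = t * (\<Sum>j=0..c. p j) + (1 - t) * (\<Sum>j=0..c. q j)"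
    by (simp add: sum.distrib sum_distrib_left)
  then show "(\<Sum>j=0..c. t * p j + (1 - t) * q j) = 1" using p q by (simp add: Pset_def)
next
  fix j assume j: "j \<in> {1..c}"
  have "real (c - j + 1) * p (j - 1) \<le> lam * d * p j" "real (c - j + 1) * q (j - 1) \<le> lam * d * q j"
    using p q j by (auto simp: Pset_def)
  then have "t * (real (c - j + 1) * p (j - 1)) + (1 - t) * (real (c - j + 1) * q (j - 1))
      \<le> t * (lam * d * p j) + (1 - t) * (lam * d * q j)"
    using t by (intro add_mono mult_left_mono) auto
  then show "real (c - j + 1) * (t * p (j - 1) + (1 - t) * q (j - 1)) \<le> lam * d * (t * p j + (1 - t) * q j)"
    by (simp add: algebra_simps)
qed

lemma induced_policy_bounds:
  assumes "0 < lam * d" and p: "p \<in> Pset c lam d" and j: "j \<in> {1..c}"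
  shows "0 < induced_policy c lam d p j" "induced_policy c lam d p j \<le> 1"
proof -
  have "0 < p j" "0 < p (j - 1)" "real (c - j + 1) * p (j - 1) \<le> lam * d * p j"
    using p j by (auto simp: Pset_def)
  then show "0 < induced_policy c lam d p j" "induced_policy c lam d p j \<le> 1"
    using assms(1) by (auto simp: induced_policy_def divide_le_eq)
qed

lemma PiR_concave_comb:
  fixes g :: "real \<Rightarrow> real"
  assumes "0 < lam" "0 < d" "concave_on {0..1} g"
    and p: "p \<in> Pset c lam d" and q: "q \<in> Pset c lam d" and t: "0 \<le> t" "t \<le> 1"
  shows "t * PiR c lam d g p + (1 - t) * PiR c lam d g q \<le> PiR c lam d g (\<lambda>j. t * p j + (1 - t) * q j)"
proof -
  define m where "m = (\<lambda>j. t * p j + (1 - t) * q j)"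
  have "t * (p j * lam * g (induced_policy c lam d p j)) + (1 - t) * (q j * lam * g (induced_policy c lam d q j))
      \<le> m j * lam * g (induced_policy c lam d m j)" if j: "j \<in> {1..c}" for j
  proof -
    define k where "k = real (c - j + 1) / (lam * d)"
    define u where "u = (\<lambda>w :: nat \<Rightarrow> real. k * w (j - 1))"
    have ratio: "induced_policy c lam d w j = u w / w j" for w
      by (simp add: induced_policy_def u_def k_def)
    have "0 < lam * d" using assms by simp
    then have "u p / p j \<in> {0..1}" "u q / q j \<in> {0..1}"
      unfolding ratio[symmetric]
      using induced_policy_bounds[OF _ p j] induced_policy_bounds[OF _ q j] by (auto simp: less_imp_le)
    moreover have "0 < p j" "0 < q j" using p q j by (auto simp: Pset_def)
    ultimately have "t * (p j * g (u p / p j)) + (1 - t) * (q j * g (u q / q j))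
        \<le> m j * g ((t * u p + (1 - t) * u q) / m j)"
      using concave_on_perspective[OF assms(3) _ _ t] unfolding m_def by blast
    moreover have "t * u p + (1 - t) * u q = u m"
      by (simp add: u_def m_def algebra_simps)
    ultimately have "lam * (t * (p j * g (u p / p j)) + (1 - t) * (q j * g (u q / q j)))
        \<le> lam * (m j * g (u m / m j))"
      using assms(1) by simp
    then show ?thesis unfolding ratio by (simp add: algebra_simps)
  qed
  then have "(\<Sum>j=1..c. t * (p j * lam * g (induced_policy c lam d p j))
      + (1 - t) * (q j * lam * g (induced_policy c lam d q j)))
      \<le> (\<Sum>j=1..c. m j * lam * g (induced_policy c lam d m j))"
    by (intro sum_mono) simp
  then show ?thesis
    by (simp add: PiR_def induced_policy_def m_def sum.distrib sum_distrib_left)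
qed

lemma balance_dist_induced_policy:
  assumes "0 < lam" "0 < d" and p: "p \<in> Pset c lam d"
  shows "balance_dist c lam d (induced_policy c lam d p) p"
  unfolding balance_dist_def
proof (intro conjI ballI allI impI)
  fix j assume j: "j \<in> {1..c}"
  then have "0 < p j" using p by (auto simp: Pset_def)
  then show "p j * lam * induced_policy c lam d p j = p (j - 1) * real (c - j + 1) / d"
    using assms by (simp add: induced_policy_def field_simps)
qed (use p in \<open>auto simp: Pset_def less_imp_le\<close>)

lemma balance_dist_product_form:
  assumes "0 < lam" "0 < d" "\<forall>i\<in>{1..c}. 0 < x i"
    and bal: "balance_dist c lam d x p" and "j \<le> c"
  shows "p j = p 0 * (\<Prod>i=1..j. real (c - i + 1) / (d * lam * x i))"
  using \<open>j \<le> c\<close>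
proof (induction j)
  case (Suc j)
  have "p (Suc j) * lam * x (Suc j) = p j * real (c - Suc j + 1) / d"
    using bal Suc.prems unfolding balance_dist_def by (metis atLeastAtMost_iff diff_Suc_1 le_add1 plus_1_eq_Suc)
  moreover have "0 < x (Suc j)" using assms(3) Suc.prems by simp
  ultimately have "p (Suc j) = p j * (real (c - Suc j + 1) / (d * lam * x (Suc j)))"
    using assms(1,2) by (simp add: field_simps)
  then show ?case using Suc by (simp add: prod.cl_ivl_Suc)
qed simp

lemma balance_dist_unique:
  assumes "0 < lam" "0 < d" "\<forall>i\<in>{1..c}. 0 < x i"
    and p: "balance_dist c lam d x p" and q: "balance_dist c lam d x q"
  shows "p = q"
proof -
  define w where "w j = (\<Prod>i=1..j. real (c - i + 1) / (d * lam * x i))" for j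
  have form: "r j = r 0 * w j" if "balance_dist c lam d x r" "j \<le> c" for r j
    using balance_dist_product_form[OF assms(1-3) that] unfolding w_def .
  have total: "r 0 * (\<Sum>j=0..c. w j) = 1" if r: "balance_dist c lam d x r" for r
  proof -
    have "(\<Sum>j=0..c. r j) = (\<Sum>j=0..c. r 0 * w j)"
      by (intro sum.cong refl form[OF r]) simp
    then show ?thesis using r by (simp add: balance_dist_def sum_distrib_left)
  qed
  have "(\<Sum>j=0..c. w j) \<noteq> 0" using total[OF p] by auto
  then have "p 0 = q 0" using total[OF p] total[OF q] by (metis mult_right_cancel)
  show ?thesis
  proof
    fix j show "p j = q j"
    proof (cases "j \<le> c")
      case True
      then show ?thesis using form[OF p True] form[OF q True] \<open>p 0 = q 0\<close> by simp
    qed (use p q in \<open>simp add: balance_dist_def\<close>)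
  qed
qed

lemma steady_state_eqI:
  assumes "0 < lam" "0 < d" "\<forall>i\<in>{1..c}. 0 < x i" "balance_dist c lam d x p"
  shows "steady_state c lam d x = p"
  unfolding steady_state_def
  by (rule the_equality) (use assms balance_dist_unique in blast)+

theorem proposition2:
  fixes c :: nat and lam d :: real and g :: "real \<Rightarrow> real"
  assumes lam: "lam > 0" and d: "d > 0"
    and xstar: "0 < real c / (lam * d)" "real c / (lam * d) < 1"
    and g_concave: "concave_on {0..1} g"
    and g_mono: "mono_on {0..1} g"
    and g0: "g 0 = 0"
  shows "(\<forall>p\<in>Pset c lam d. \<forall>q\<in>Pset c lam d. \<forall>t::real. 0 \<le> t \<and> t \<le> 1 \<longrightarrow>
            (\<lambda>j. t * p j + (1 - t) * q j) \<in> Pset c lam d)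
       \<and> (\<forall>p\<in>Pset c lam d. \<forall>q\<in>Pset c lam d. \<forall>t::real. 0 \<le> t \<and> t \<le> 1 \<longrightarrow>
            t * PiR c lam d g p + (1 - t) * PiR c lam d g q
              \<le> PiR c lam d g (\<lambda>j. t * p j + (1 - t) * q j))
       \<and> (\<forall>p\<in>Pset c lam d.
            let x = (\<lambda>j. real (c - j + 1) * p (j - 1) / (lam * d * p j)) in
              is_policy c x \<and> (\<forall>j\<in>{1..c}. 0 < x j \<and> x j \<le> 1)
              \<and> steady_state c lam d x = p
              \<and> avg_reward c lam d g x = PiR c lam d g p)"
proof (intro conjI ballI allI impI)
  fix p q :: "nat \<Rightarrow> real" and t :: real
  assume "p \<in> Pset c lam d" "q \<in> Pset c lam d" "0 \<le> t \<and> t \<le> 1"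
  then show "(\<lambda>j. t * p j + (1 - t) * q j) \<in> Pset c lam d"
    and "t * PiR c lam d g p + (1 - t) * PiR c lam d g q \<le> PiR c lam d g (\<lambda>j. t * p j + (1 - t) * q j)"
    using Pset_convex_comb PiR_concave_comb[OF lam d g_concave] by auto
next
  fix p assume p: "p \<in> Pset c lam d"
  have policy_eq: "(\<lambda>j. real (c - j + 1) * p (j - 1) / (lam * d * p j)) = induced_policy c lam d p"
    by (simp add: fun_eq_iff induced_policy_def)
  have bounds: "\<forall>j\<in>{1..c}. 0 < induced_policy c lam d p j \<and> induced_policy c lam d p j \<le> 1"
    using induced_policy_bounds[OF _ p] lam d by simp
  have steady: "steady_state c lam d (induced_policy c lam d p) = p"
    using steady_state_eqI[OF lam d _ balance_dist_induced_policy[OF lam d p]] bounds by blast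
  show "let x = (\<lambda>j. real (c - j + 1) * p (j - 1) / (lam * d * p j)) in
          is_policy c x \<and> (\<forall>j\<in>{1..c}. 0 < x j \<and> x j \<le> 1)
          \<and> steady_state c lam d x = p \<and> avg_reward c lam d g x = PiR c lam d g p"
    unfolding Let_def policy_eq
    using bounds steady by (simp add: is_policy_def avg_reward_def PiR_def induced_policy_def less_imp_le)
qed

end
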